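(* Let $p$ be a prime and $n\ge 2$ an integer. Let $M$ be the $(n-1)\times(n-1)$ matrix, with rows and columns indexed by $1,\dots,n-1$ (index $i$ corresponding to the vertex $[p^i]$ of $\Gamma_E[\mathbb{Z}_{p^n}]$), defined by $M_{ij}=1$ if $i+j\ge n$ and $M_{ij}=0$ otherwise. Then the characteristic polynomial of $M$ is $$\det(\lambda I-M)=\sum_{k=0}^{n-1}(-1)^{\lfloor (k+1)/2\rfloor}\, b_k\,\lambda^{\,n-1-k},\qquad b_k=\binom{p_k}{k},\quad p_k=\Big\lfloor \frac{n-1+k}{2}\Big\rfloor .$$ That is, $\det(\lambda I-M)=\lambda^{n-1}-b_1\lambda^{n-2}-b_2\lambda^{n-3}+b_3\lambda^{n-4}+b_4\lambda^{n-5}-\cdots$, with the signs following the pattern $+,-,-,+,+,-,-,\dots$. For example, for $n=6$ it equals $\lambda^5-3\lambda^4-3\lambda^3+4\lambda^2+\lambda-1$.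
   Context: For a commutative ring $R$ with identity, define $x\sim y$ iff $\operatorname{ann}_R(x)=\operatorname{ann}_R(y)$. The compressed zero-divisor graph $\Gamma_E[R]$ has as vertices the equivalence classes $[x]$ of nonzero zero divisors (i.e. excluding $[0]$ and $[1]$), with two distinct classes $[x],[y]$ adjacent iff $xy=0$. For $R=\mathbb{Z}_{p^n}$ ($p$ prime) the vertices are exactly $[p],[p^2],\dots,[p^{n-1}]$, and $[p^i]\cdot[p^j]=0$ iff $i+j\ge n$. The matrix $M$ in the claim is the paper's "adjacency matrix" of $\Gamma_E[\mathbb{Z}_{p^n}]$: it records $[p^i][p^j]=0$ including diagonal entries (so $M_{ii}=1$ exactly when $2i\ge n$). $\lfloor\cdot\rfloor$ denotes the floor function. *)

theory Defs
  imports "Jordan_Normal_Form.Char_Poly"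
begin

text \<open>Adjacency matrix (with loops) of the compressed zero-divisor graph of Z_(p^n).
  Row/column index i (0-based) corresponds to the vertex [p^(i+1)], so the entry is 1
  iff (i+1)+(j+1) >= n.\<close>
definition zdg_matrix :: "nat \<Rightarrow> int mat" where
  "zdg_matrix n = mat (n - 1) (n - 1) (\<lambda>(i, j). if (i + 1) + (j + 1) \<ge> n then 1 else 0)"

end

theory Submission
  imports Defs
begin

text \<open>Let \<open>D(m)\<close> be the determinant of \<open>\<lambda>I - A\<close>, where \<open>A\<close> is the \<open>m \<times> m\<close> 0/1 matrix with
  ones exactly where \<open>i + j \<ge> m - 1\<close> (0-based indices); the characteristic polynomial in question
  is \<open>D(n - 1)\<close>. Expanding along the first row, subtracting the last two rows from each other and
  perturbing one diagonal entry relate \<open>D(m)\<close> to the analogous determinants for the staircases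
  \<open>i + j \<ge> m - 2\<close> and \<open>i + j \<ge> m\<close>; eliminating those gives the recurrence
  \<open>D(m) = (2\<lambda>\<^sup>2 - 1) D(m - 2) - \<lambda>\<^sup>4 D(m - 4)\<close>. By Pascal's rule the claimed polynomials
  satisfy the same recurrence, and both sides agree for \<open>m \<le> 3\<close>.\<close>

lemma laplace_expansion_row_single:
  assumes A: "(A :: 'a :: comm_ring_1 mat) \<in> carrier_mat n n" and "i < n" "j < n"
    and "\<And>l. l < n \<Longrightarrow> l \<noteq> j \<Longrightarrow> A $$ (i, l) = 0"
  shows "det A = A $$ (i, j) * cofactor A i j"
proof -
  have "det A = (\<Sum>l<n. A $$ (i, l) * cofactor A i l)"
    using laplace_expansion_row[OF A \<open>i < n\<close>] .
  also have "\<dots> = (\<Sum>l\<in>{j}. A $$ (i, l) * cofactor A i l)"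
    using assms by (intro sum.mono_neutral_right) auto
  finally show ?thesis by simp
qed

lemma laplace_expansion_column_single:
  assumes A: "(A :: 'a :: comm_ring_1 mat) \<in> carrier_mat n n" and "i < n" "j < n"
    and "\<And>l. l < n \<Longrightarrow> l \<noteq> i \<Longrightarrow> A $$ (l, j) = 0"
  shows "det A = A $$ (i, j) * cofactor A i j"
proof -
  have "det A = (\<Sum>l<n. A $$ (l, j) * cofactor A l j)"
    using laplace_expansion_column[OF A \<open>j < n\<close>] .
  also have "\<dots> = (\<Sum>l\<in>{i}. A $$ (l, j) * cofactor A l j)"
    using assms by (intro sum.mono_neutral_right) auto
  finally show ?thesis by simp
qed

lemma laplace_expansion_row_pair:
  assumes A: "(A :: 'a :: comm_ring_1 mat) \<in> carrier_mat n n"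
    and "i < n" "j < n" "j' < n" "j \<noteq> j'"
    and "\<And>l. l < n \<Longrightarrow> l \<noteq> j \<Longrightarrow> l \<noteq> j' \<Longrightarrow> A $$ (i, l) = 0"
  shows "det A = A $$ (i, j) * cofactor A i j + A $$ (i, j') * cofactor A i j'"
proof -
  have "det A = (\<Sum>l<n. A $$ (i, l) * cofactor A i l)"
    using laplace_expansion_row[OF A \<open>i < n\<close>] .
  also have "\<dots> = (\<Sum>l\<in>{j, j'}. A $$ (i, l) * cofactor A i l)"
    using assms by (intro sum.mono_neutral_right) auto
  finally show ?thesis using \<open>j \<noteq> j'\<close> by simp
qed

lemma det_update_entry:
  assumes A: "(A :: 'a :: comm_ring_1 mat) \<in> carrier_mat n n" and B: "B \<in> carrier_mat n n"
    and "i < n" "j < n"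
    and agree: "\<And>k l. k < n \<Longrightarrow> l < n \<Longrightarrow> (k, l) \<noteq> (i, j) \<Longrightarrow> A $$ (k, l) = B $$ (k, l)"
  shows "det A = det B + (A $$ (i, j) - B $$ (i, j)) * cofactor A i j"
proof -
  have cofactor_eq: "cofactor B i l = cofactor A i l" for l
  proof -
    have "mat_delete B i l = mat_delete A i l"
      using A B agree by (intro eq_matI) (auto simp: mat_delete_def insert_index_def)
    then show ?thesis by (simp add: cofactor_def)
  qed
  have "det A - det B = (\<Sum>l<n. (A $$ (i, l) - B $$ (i, l)) * cofactor A i l)"
    by (simp add: laplace_expansion_row[OF A \<open>i < n\<close>] laplace_expansion_row[OF B \<open>i < n\<close>]
        cofactor_eq left_diff_distrib sum_subtractf)
  also have "\<dots> = (\<Sum>l\<in>{j}. (A $$ (i, l) - B $$ (i, l)) * cofactor A i l)"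
    using assms by (intro sum.mono_neutral_right) auto
  finally show ?thesis by (simp add: algebra_simps)
qed

text \<open>For \<open>c = 1\<close> this is the characteristic matrix of \<open>zdg_matrix (m + 1)\<close>; \<open>c = 0\<close> and
  \<open>c = 2\<close> are the neighbouring staircases that arise in its cofactor expansions.\<close>
definition stair_char_mat :: "nat \<Rightarrow> nat \<Rightarrow> int poly mat" where
  "stair_char_mat c m = mat m m (\<lambda>(i, j).
     (if i = j then [:0, 1:] else 0) - (if m \<le> i + j + c then 1 else 0))"

lemma stair_char_mat_carrier [simp]: "stair_char_mat c m \<in> carrier_mat m m"
  and stair_char_mat_dim [simp]:
    "dim_row (stair_char_mat c m) = m" "dim_col (stair_char_mat c m) = m"
  by (auto simp: stair_char_mat_def)

lemma stair_char_mat_index [simp]: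
  "i < m \<Longrightarrow> j < m \<Longrightarrow> stair_char_mat c m $$ (i, j) =
     (if i = j then [:0, 1:] else 0) - (if m \<le> i + j + c then 1 else 0)"
  by (simp add: stair_char_mat_def)

lemma char_poly_zdg_matrix: "char_poly (zdg_matrix n) = det (stair_char_mat 1 (n - 1))"
proof -
  have "char_poly_matrix (zdg_matrix n) = stair_char_mat 1 (n - 1)"
    by (rule eq_matI) (auto simp: char_poly_matrix_def zdg_matrix_def)
  then show ?thesis by (simp add: char_poly_def)
qed

lemma det_stair_char_mat_0:
  assumes "l \<ge> 1"
  shows "det (stair_char_mat 0 l) = [:0, 1:] * det (stair_char_mat 1 (l - 1))"
proof -
  have "det (stair_char_mat 0 l) =
      stair_char_mat 0 l $$ (0, 0) * cofactor (stair_char_mat 0 l) 0 0"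
    using assms by (intro laplace_expansion_row_single) auto
  moreover have "mat_delete (stair_char_mat 0 l) 0 0 = stair_char_mat 1 (l - 1)"
    by (rule eq_matI) (auto simp: mat_delete_def)
  ultimately show ?thesis using assms by (simp add: cofactor_def)
qed

lemma det_stair_char_mat_1:
  assumes "m \<ge> 2"
  shows "det (stair_char_mat 1 m) =
    [:0, 1:] * det (stair_char_mat 2 (m - 1)) - det (stair_char_mat 1 (m - 2))"
proof -
  obtain k where m: "m = Suc (Suc k)" using assms by (metis add_2_eq_Suc le_Suc_ex)
  let ?A = "stair_char_mat 1 m"
  define Q where "Q = mat_delete ?A 0 (m - 1)"
  have Q: "Q \<in> carrier_mat (m - 1) (m - 1)" unfolding Q_def by (rule mat_delete_carrier) simp
  have Q_index: "Q $$ (i, j) = ?A $$ (i + 1, j)" if "i < m - 1" "j < m - 1" for i j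
    using that unfolding Q_def mat_delete_def by auto
  have "det Q = Q $$ (m - 2, 0) * cofactor Q (m - 2) 0"
    using assms by (intro laplace_expansion_column_single[OF Q]) (auto simp: Q_index)
  moreover have "mat_delete Q (m - 2) 0 = stair_char_mat 1 (m - 2)"
    using Q by (intro eq_matI) (auto simp: mat_delete_def Q_index m)
  ultimately have det_Q: "det Q = - ((-1) ^ (m - 2) * det (stair_char_mat 1 (m - 2)))"
    by (simp add: cofactor_def Q_index m)
  have "det ?A = ?A $$ (0, 0) * cofactor ?A 0 0 + ?A $$ (0, m - 1) * cofactor ?A 0 (m - 1)"
    using assms by (intro laplace_expansion_row_pair) auto
  moreover have "mat_delete ?A 0 0 = stair_char_mat 2 (m - 1)"
    by (rule eq_matI) (auto simp: mat_delete_def)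
  moreover have "cofactor ?A 0 (m - 1) = (-1) ^ (m - 1) * det Q"
    by (simp add: cofactor_def Q_def)
  ultimately show ?thesis using det_Q by (simp add: cofactor_def m)
qed

lemma det_stair_char_mat_2:
  assumes "s \<ge> 2"
  shows "det (stair_char_mat 2 s) = [:0, 1:] * det (stair_char_mat 1 (s - 1))
    + [:0, 1:] * (det (stair_char_mat 1 (s - 1)) - [:0, 1:] * det (stair_char_mat 0 (s - 2)))"
proof -
  obtain k where s: "s = Suc (Suc k)" using assms by (metis add_2_eq_Suc le_Suc_ex)
  \<comment> \<open>The last two rows differ only on the diagonal, so subtracting them leaves a row with two entries.\<close>
  define B where "B = addrow (-1) (s - 1) (s - 2) (stair_char_mat 2 s)"
  have B: "B \<in> carrier_mat s s" unfolding B_def carrier_mat_def by (simp add: s)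
  have B_index: "B $$ (i, j) = (if i = s - 1
      then (if j = s - 1 then [:0, 1:] else 0) - (if j = s - 2 then [:0, 1:] else 0)
      else stair_char_mat 2 s $$ (i, j))" if "i < s" "j < s" for i j
    using that unfolding B_def by (auto simp: s)
  \<comment> \<open>\<open>F\<close> is \<open>stair_char_mat 1 (s - 1)\<close> with the \<open>\<lambda>\<close> in its last diagonal entry removed.\<close>
  define F where "F = mat_delete B (s - 1) (s - 2)"
  have F: "F \<in> carrier_mat (s - 1) (s - 1)" unfolding F_def by (rule mat_delete_carrier[OF B])
  have F_index: "F $$ (i, j) = stair_char_mat 2 s $$ (i, if j < s - 2 then j else s - 1)"
    if "i < s - 1" "j < s - 1" for i j
    using that B unfolding F_def mat_delete_def by (auto simp: B_index s insert_index_def)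
  have "det (stair_char_mat 2 s) = det B"
    unfolding B_def by (rule det_addrow[symmetric, where n = s]) (use assms in auto)
  also have "\<dots> = B $$ (s - 1, s - 2) * cofactor B (s - 1) (s - 2)
      + B $$ (s - 1, s - 1) * cofactor B (s - 1) (s - 1)"
    using assms by (intro laplace_expansion_row_pair[OF B]) (auto simp: B_index)
  finally have "det (stair_char_mat 2 s) = B $$ (s - 1, s - 2) * cofactor B (s - 1) (s - 2)
      + B $$ (s - 1, s - 1) * cofactor B (s - 1) (s - 1)" .
  moreover have "mat_delete B (s - 1) (s - 1) = stair_char_mat 1 (s - 1)"
    using B by (intro eq_matI) (auto simp: mat_delete_def B_index s)
  ultimately have det_B:
      "det (stair_char_mat 2 s) = [:0, 1:] * det F + [:0, 1:] * det (stair_char_mat 1 (s - 1))"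
    by (simp add: cofactor_def B_index s F_def)
  have "det (stair_char_mat 1 (s - 1)) = det F
      + (stair_char_mat 1 (s - 1) $$ (s - 2, s - 2) - F $$ (s - 2, s - 2))
        * cofactor (stair_char_mat 1 (s - 1)) (s - 2) (s - 2)"
    using F by (intro det_update_entry) (auto simp: F_index s)
  moreover have "mat_delete (stair_char_mat 1 (s - 1)) (s - 2) (s - 2) = stair_char_mat 0 (s - 2)"
    by (rule eq_matI) (auto simp: mat_delete_def s)
  ultimately have "det (stair_char_mat 1 (s - 1)) = det F + [:0, 1:] * det (stair_char_mat 0 (s - 2))"
    by (simp add: cofactor_def F_index s)
  then show ?thesis using det_B by (simp add: algebra_simps)
qed

lemma det_stair_char_mat_1_rec:
  assumes "m \<ge> 4"
  shows "det (stair_char_mat 1 m) = (2 * [:0, 1:] ^ 2 - 1) * det (stair_char_mat 1 (m - 2))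
    - [:0, 1:] ^ 4 * det (stair_char_mat 1 (m - 4))"
proof -
  have ring_identity: "x * (x * a + x * (a - x * (x * b))) - a = (2 * x ^ 2 - 1) * a - x ^ 4 * b"
    for x a b :: "'a :: comm_ring_1"
    by (simp add: algebra_simps eval_nat_numeral)
  let ?X = "[:0, 1:] :: int poly" and ?D = "\<lambda>m. det (stair_char_mat 1 m)"
  have "m - 1 - 1 = m - 2" "m - 1 - 2 = m - 3" "m - 3 - 1 = m - 4" by auto
  then have "?D m = ?X * (?X * ?D (m - 2) + ?X * (?D (m - 2) - ?X * (?X * ?D (m - 4)))) - ?D (m - 2)"
    using assms det_stair_char_mat_1[of m] det_stair_char_mat_2[of "m - 1"]
      det_stair_char_mat_0[of "m - 3"]
    by simp
  also have "\<dots> = (2 * ?X ^ 2 - 1) * ?D (m - 2) - ?X ^ 4 * ?D (m - 4)"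
    by (rule ring_identity)
  finally show ?thesis .
qed

lemma det_stair_char_mat_1_small:
  "det (stair_char_mat 1 0) = 1"
  "det (stair_char_mat 1 1) = [:-1, 1:]"
  "det (stair_char_mat 1 2) = [:-1, -1, 1:]"
  "det (stair_char_mat 1 3) = [:1, -1, -2, 1:]"
proof -
  have det_1: "det (stair_char_mat c 1) = [:-1, 1:]" if "c \<ge> 1" for c
    using that by (subst det_single) (auto simp: one_pCons)
  show "det (stair_char_mat 1 0) = 1" by simp
  show D1: "det (stair_char_mat 1 1) = [:-1, 1:]" by (rule det_1) simp
  then show "det (stair_char_mat 1 2) = [:-1, -1, 1:]"
    using det_stair_char_mat_1[of 2] det_1[of 2] by (simp add: one_pCons numeral_poly)
  have "det (stair_char_mat 2 2) = [:0, -2, 1:]"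
    using det_stair_char_mat_2[of 2] D1 by (simp add: one_pCons numeral_poly)
  then show "det (stair_char_mat 1 3) = [:1, -1, -2, 1:]"
    using det_stair_char_mat_1[of 3] D1 by (simp add: one_pCons numeral_poly)
qed

definition stair_coeff :: "nat \<Rightarrow> nat \<Rightarrow> int" where
  "stair_coeff m k = (-1) ^ ((k + 1) div 2) * int (((m + k) div 2) choose k)"

definition stair_poly :: "nat \<Rightarrow> int poly" where
  "stair_poly m = (\<Sum>k = 0..m. monom (stair_coeff m k) (m - k))"

lemma stair_coeff_eq_0: "m < k \<Longrightarrow> stair_coeff m k = 0"
  by (simp add: stair_coeff_def binomial_eq_0)

lemma coeff_stair_poly: "coeff (stair_poly m) j = (if j \<le> m then stair_coeff m (m - j) else 0)"
proof -
  have "coeff (stair_poly m) j = (\<Sum>k = 0..m. if k = m - j \<and> j \<le> m then stair_coeff m k else 0)"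
    unfolding stair_poly_def coeff_sum coeff_monom by (rule sum.cong) auto
  then show ?thesis by (simp add: sum.delta)
qed

lemma coeff_monom_mult_stair_poly:
  "coeff (monom c d * stair_poly m) j = (if j \<le> m + d then c * stair_coeff m (m + d - j) else 0)"
  by (auto simp: coeff_monom_mult coeff_stair_poly stair_coeff_eq_0)

lemma int_binomial_add_2:
  "int ((q + 2) choose (k + 2)) =
    2 * int ((q + 1) choose (k + 2)) + int (q choose k) - int (q choose (k + 2))"
  using binomial_Suc_Suc[of "q + 1" "k + 1"] binomial_Suc_Suc[of q k] binomial_Suc_Suc[of q "k + 1"]
  by simp

lemma stair_coeff_rec:
  assumes "m \<ge> 4"
  shows "stair_coeff m k =
    2 * stair_coeff (m - 2) k - (if k \<ge> 2 then stair_coeff (m - 2) (k - 2) else 0) - stair_coeff (m - 4) k"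
proof -
  obtain r where m: "m = r + 4" using assms by (metis add.commute le_Suc_ex)
  consider "k = 0" | "k = 1" | k' where "k = k' + 2"
    by (metis add_2_eq_Suc' not0_implies_Suc One_nat_def)
  then show ?thesis
  proof cases
    case 1
    then show ?thesis by (simp add: stair_coeff_def)
  next
    case 2
    have "(r + 5) div 2 = (r + 1) div 2 + 2" "(r + 3) div 2 = (r + 1) div 2 + 1" by linarith+
    then show ?thesis by (simp add: stair_coeff_def m 2)
  next
    case 3
    define q where "q = (r + k' + 2) div 2"
    have "(m + k) div 2 = q + 2" "(m - 2 + k) div 2 = q + 1"
      "(m - 4 + k) div 2 = q" "(m - 2 + (k - 2)) div 2 = q"
      unfolding q_def m 3 by presburger+
    moreover have "(k + 1) div 2 = Suc ((k' + 1) div 2)" unfolding 3 by linarith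
    ultimately show ?thesis
      using int_binomial_add_2[of q k'] by (simp add: stair_coeff_def 3 algebra_simps)
  qed
qed

lemma stair_poly_rec:
  assumes "m \<ge> 4"
  shows "stair_poly m =
    (2 * [:0, 1:] ^ 2 - 1) * stair_poly (m - 2) - [:0, 1:] ^ 4 * stair_poly (m - 4)"
proof (rule poly_eqI)
  fix j
  have m_2: "Suc (Suc (m - 2)) = m" using assms by arith
  have X_power: "[:0, 1:] ^ n = (monom 1 n :: int poly)" for n
    by (simp add: monom_altdef)
  have "2 * [:0, 1:] ^ 2 = (monom 2 2 :: int poly)"
    by (simp add: X_power numeral_poly smult_monom)
  then have "coeff ((2 * [:0, 1:] ^ 2 - 1) * stair_poly (m - 2) - [:0, 1:] ^ 4 * stair_poly (m - 4)) j
    = (if j \<le> m then 2 * stair_coeff (m - 2) (m - j) else 0)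
      - (if j \<le> m - 2 then stair_coeff (m - 2) (m - 2 - j) else 0)
      - (if j \<le> m then stair_coeff (m - 4) (m - j) else 0)"
    using assms
    by (simp add: X_power left_diff_distrib coeff_monom_mult_stair_poly coeff_stair_poly m_2)
  also have "\<dots> = coeff (stair_poly m) j"
    using assms stair_coeff_rec[OF assms, of "m - j"]
    by (auto simp: coeff_stair_poly)
  finally show "coeff (stair_poly m) j =
      coeff ((2 * [:0, 1:] ^ 2 - 1) * stair_poly (m - 2) - [:0, 1:] ^ 4 * stair_poly (m - 4)) j"
    by simp
qed

lemma stair_poly_small:
  "stair_poly 0 = 1"
  "stair_poly 1 = [:-1, 1:]"
  "stair_poly 2 = [:-1, -1, 1:]"
  "stair_poly 3 = [:1, -1, -2, 1:]"
proof -
  have coeffs: "stair_coeff 0 0 = 1" "stair_coeff 1 0 = 1" "stair_coeff 1 1 = -1"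
    "stair_coeff 2 0 = 1" "stair_coeff 2 1 = -1" "stair_coeff 2 2 = -1"
    "stair_coeff 3 0 = 1" "stair_coeff 3 1 = -2" "stair_coeff 3 2 = -1" "stair_coeff 3 3 = 1"
    by (simp_all add: stair_coeff_def)
  note eval = stair_poly_def coeffs monom_altdef power_numeral_reduce one_pCons numeral_poly
  show "stair_poly 0 = 1" by (simp add: eval del: One_nat_def)
  have "{0..1::nat} = {0, 1}" by auto
  then show "stair_poly 1 = [:-1, 1:]" by (simp add: eval del: One_nat_def)
  have "{0..2::nat} = {0, 1, 2}" by auto
  then show "stair_poly 2 = [:-1, -1, 1:]" by (simp add: eval del: One_nat_def)
  have "{0..3::nat} = {0, 1, 2, 3}" by auto
  then show "stair_poly 3 = [:1, -1, -2, 1:]" by (simp add: eval del: One_nat_def)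
qed

lemma det_stair_char_mat_1_eq_stair_poly: "det (stair_char_mat 1 m) = stair_poly m"
proof (induction m rule: less_induct)
  case (less m)
  show ?case
  proof (cases "m \<ge> 4")
    case True
    then show ?thesis
      using det_stair_char_mat_1_rec[OF True] stair_poly_rec[OF True] less[of "m - 2"] less[of "m - 4"]
      by simp
  next
    case False
    then consider "m = 0" | "m = 1" | "m = 2" | "m = 3" by linarith
    then show ?thesis by cases (simp_all only: det_stair_char_mat_1_small stair_poly_small)
  qed
qed

theorem theorem3p1:
  fixes p n :: nat
  assumes "prime p" and "n \<ge> 2"
  shows "char_poly (zdg_matrix n) =
    (\<Sum>k = 0..n - 1. monom ((-1) ^ ((k + 1) div 2) * int (((n - 1 + k) div 2) choose k)) (n - 1 - k))"
proof -
  have "char_poly (zdg_matrix n) = stair_poly (n - 1)"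
    unfolding char_poly_zdg_matrix det_stair_char_mat_1_eq_stair_poly ..
  then show ?thesis unfolding stair_poly_def stair_coeff_def .
qed

end
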